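(* Let $\mu$ be an $E_2$-invariant Borel probability measure on $\mathbb{T}$ and let $F$ be a $p$-flower for $E_2$ (with $p\ge 3$) such that $\mathrm{supp}(\mu)\subset F$. If $\mu(P_i)=0$ for some petal $P_i$ of $F$, then there is a $(p-2)$-flower $\tilde F$ for $E_2$ with $\mathrm{supp}(\mu)\subset\tilde F$ and $P_i\not\subset\tilde F$.
   Context: $\mathbb{T}=\mathbb{R}/\mathbb{Z}$, $E_2(x)=2x\bmod1$. A preimage selector for $E_2$ is a map $\eta:\mathbb{T}\to\mathbb{T}$ with $E_2(\eta(x))=x$ for all $x$, having finitely many discontinuities, each a jump discontinuity (both one-sided limits exist, differ, and one equals the value). A $p$-flower is $\overline{\eta(\mathbb{T})}$ for a preimage selector $\eta$ with exactly $p$ discontinuities; its $p$ connected components (closed intervals) are its petals. *)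

theory Defs
  imports "HOL-Probability.Probability"
begin

text \<open>The circle T = R/Z is modelled as the unit circle in the complex plane,
  parametrised by t \<mapsto> exp(2 pi i t); the doubling map E_2 becomes z \<mapsto> z^2.\<close>

definition circ :: "complex set" where
  "circ = sphere 0 1"

definition cis2pi :: "real \<Rightarrow> complex" where
  "cis2pi t = exp (2 * of_real pi * \<i> * of_real t)"

definition E2 :: "complex \<Rightarrow> complex" where
  "E2 z = z ^ 2"

definition discont :: "(complex \<Rightarrow> complex) \<Rightarrow> complex set" where
  "discont \<eta> = {z \<in> circ. \<not> continuous (at z within circ) \<eta>}"

definition jump_at :: "(complex \<Rightarrow> complex) \<Rightarrow> complex \<Rightarrow> bool" where
  "jump_at \<eta> z \<longleftrightarrow> (\<exists>t a b. cis2pi t = z \<and> a \<noteq> b \<and>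
      ((\<lambda>s. \<eta> (cis2pi s)) \<longlongrightarrow> a) (at_left t) \<and>
      ((\<lambda>s. \<eta> (cis2pi s)) \<longlongrightarrow> b) (at_right t) \<and>
      (\<eta> z = a \<or> \<eta> z = b))"

definition preimage_selector :: "(complex \<Rightarrow> complex) \<Rightarrow> bool" where
  "preimage_selector \<eta> \<longleftrightarrow>
     (\<forall>z\<in>circ. \<eta> z \<in> circ \<and> E2 (\<eta> z) = z) \<and>
     finite (discont \<eta>) \<and> (\<forall>z\<in>discont \<eta>. jump_at \<eta> z)"

definition flower :: "nat \<Rightarrow> complex set \<Rightarrow> bool" where
  "flower p F \<longleftrightarrow> (\<exists>\<eta>. preimage_selector \<eta> \<and> card (discont \<eta>) = p \<and>
                         F = closure (\<eta> ` circ))"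

definition petals :: "complex set \<Rightarrow> complex set set" where
  "petals F = components F"

definition supp :: "complex measure \<Rightarrow> complex set" where
  "supp \<mu> = {x. \<forall>U. open U \<and> x \<in> U \<longrightarrow> emeasure \<mu> U > 0}"

text \<open>Borel probability measure on T, i.e. a Borel probability measure on C
  concentrated on the unit circle, invariant under E_2.\<close>
definition E2_invariant_prob :: "complex measure \<Rightarrow> bool" where
  "E2_invariant_prob \<mu> \<longleftrightarrow> prob_space \<mu> \<and> sets \<mu> = sets borel \<and>
     emeasure \<mu> circ = 1 \<and> distr \<mu> borel E2 = \<mu>"

end

theory Submission
  imports Defs
begin

(*
  The flower F is the closure of the image of a preimage selector \<eta>.  Between two consecutive
  jumps cis2pi u, cis2pi v of \<eta> the selector is continuous, so the closure of the image of the
  open arc between them is connected and lies in a single petal; every petal, in particular P,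
  contains such a closure.  At a jump the two one-sided limits of \<eta> are the two square roots of
  the jump point, hence opposite.  Replacing \<eta> by -\<eta> on the arc, and by the outer one-sided
  limits at its endpoints, therefore removes exactly these two jumps and gives a (p-2)-flower F'.
  F' covers F up to the closure of \<eta>(arc), a closed subset of the null petal P, so it still
  contains supp \<mu>; and F' misses \<eta>(arc) \<subseteq> P, because near \<eta>(arc) it consists of the opposite
  square roots.
*)

section \<open>Angle parametrisation of the circle\<close>

lemma norm_cis2pi [simp]: "norm (cis2pi t) = 1"
  unfolding cis2pi_def by simp

lemma cis2pi_in_circ [simp]: "cis2pi t \<in> circ"
  unfolding circ_def by simp

lemma cis2pi_eq_iff: "cis2pi s = cis2pi t \<longleftrightarrow> (\<exists>k::int. s = t + of_int k)"
proof -
  have "cis2pi s = cis2pi t \<longleftrightarrow>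
      (\<exists>n::int. 2 * of_real pi * \<i> * of_real s = 2 * of_real pi * \<i> * of_real t + (of_int (2 * n) * pi) * \<i>)"
    unfolding cis2pi_def exp_eq by simp
  also have "\<dots> \<longleftrightarrow> (\<exists>k::int. (2 * of_real pi * \<i>) * (of_real s :: complex) = (2 * of_real pi * \<i>) * of_real (t + of_int k))"
    by (simp add: algebra_simps)
  also have "\<dots> \<longleftrightarrow> (\<exists>k::int. s = t + of_int k)"
    by (simp only: mult_cancel_left of_real_eq_iff) simp
  finally show ?thesis .
qed

lemma cis2pi_add_of_int [simp]: "cis2pi (t + of_int k) = cis2pi t"
  using cis2pi_eq_iff by blast

lemma cis2pi_add_1 [simp]: "cis2pi (t + 1) = cis2pi t"
  using cis2pi_add_of_int[of t 1] by simp

lemma cis2pi_eq_imp_eq: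
  assumes "cis2pi s = cis2pi t" and "\<bar>s - t\<bar> < 1"
  shows "s = t"
proof -
  obtain k :: int where k: "s = t + of_int k"
    using assms(1) cis2pi_eq_iff by blast
  then have "\<bar>k\<bar> < 1"
    using assms(2) by linarith
  then show ?thesis
    using k by simp
qed

lemma isCont_cis2pi [continuous_intros]: "isCont cis2pi t"
  unfolding cis2pi_def by (intro continuous_intros)

lemma continuous_on_cis2pi: "continuous_on S cis2pi"
  by (simp add: continuous_at_imp_continuous_on isCont_cis2pi)

lemma cis2pi_local_inverse:
  "\<exists>\<phi>. isCont \<phi> (cis2pi t) \<and> \<phi> (cis2pi t) = t \<and> (\<forall>w\<in>circ. cis2pi (\<phi> w) = w)"
proof -
  define c where "c = cis2pi t"
  define \<phi> where "\<phi> w = t + Im (Ln (w / c)) / (2 * pi)" for w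
  have "c \<noteq> 0"
    using norm_cis2pi[of t] unfolding c_def by fastforce
  have "isCont (\<lambda>w. Ln (w / c)) c"
    using \<open>c \<noteq> 0\<close> by (intro continuous_intros) (auto simp: continuous_at_Ln)
  then have "isCont \<phi> c"
    unfolding \<phi>_def by (intro continuous_intros) (auto intro: continuous_Im)
  moreover have "cis2pi (\<phi> w) = w" if "w \<in> circ" for w
  proof -
    have "norm (w / c) = 1"
      using that by (simp add: circ_def c_def norm_divide)
    then have "w / c \<noteq> 0"
      by auto
    then have "Ln (w / c) = \<i> * of_real (Im (Ln (w / c)))"
      using \<open>norm (w / c) = 1\<close> by (simp add: complex_eq_iff)
    then have "exp (\<i> * of_real (Im (Ln (w / c)))) = w / c"
      using exp_Ln[OF \<open>w / c \<noteq> 0\<close>] by metis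
    moreover have "2 * of_real pi * \<i> * of_real (Im (Ln (w / c)) / (2 * pi)) = \<i> * of_real (Im (Ln (w / c)))"
      by (simp add: field_simps)
    moreover have "cis2pi (\<phi> w) = c * exp (2 * of_real pi * \<i> * of_real (Im (Ln (w / c)) / (2 * pi)))"
      unfolding \<phi>_def cis2pi_def c_def by (simp add: distrib_left exp_add)
    ultimately show ?thesis
      using \<open>c \<noteq> 0\<close> by simp
  qed
  moreover have "\<phi> c = t"
    using \<open>c \<noteq> 0\<close> by (simp add: \<phi>_def)
  ultimately show ?thesis
    unfolding c_def by blast
qed

lemma range_cis2pi: "range cis2pi = circ"
proof
  obtain \<phi> where "\<forall>w\<in>circ. cis2pi (\<phi> w) = w"
    using cis2pi_local_inverse by blast
  then show "circ \<subseteq> range cis2pi"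
    by (metis rangeI subsetI)
qed auto

lemma in_circE:
  assumes "z \<in> circ"
  obtains t where "cis2pi t = z"
  using assms range_cis2pi by (metis rangeE)

lemma continuous_within_circ_if_isCont_cis2pi:
  assumes "isCont (\<lambda>s. h (cis2pi s)) t"
  shows "continuous (at (cis2pi t) within circ) h"
proof -
  obtain \<phi> where \<phi>: "isCont \<phi> (cis2pi t)" "\<phi> (cis2pi t) = t" "\<forall>w\<in>circ. cis2pi (\<phi> w) = w"
    using cis2pi_local_inverse by blast
  have "isCont (\<lambda>w. h (cis2pi (\<phi> w))) (cis2pi t)"
    using continuous_at_compose[of "cis2pi t" \<phi> "\<lambda>s. h (cis2pi s)"] \<phi> assms by (simp add: o_def)
  then have "continuous (at (cis2pi t) within circ) (\<lambda>w. h (cis2pi (\<phi> w)))"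
    by (rule continuous_at_imp_continuous_at_within)
  show ?thesis
    unfolding continuous_within
  proof (rule Lim_transform_eventually)
    show "((\<lambda>w. h (cis2pi (\<phi> w))) \<longlongrightarrow> h (cis2pi t)) (at (cis2pi t) within circ)"
      using \<open>continuous (at (cis2pi t) within circ) (\<lambda>w. h (cis2pi (\<phi> w)))\<close> \<phi>(2)
      unfolding continuous_within by simp
    show "\<forall>\<^sub>F w in at (cis2pi t) within circ. h (cis2pi (\<phi> w)) = h w"
      using \<phi>(3) by (auto simp: eventually_at_filter)
  qed
qed

lemma cis2pi_image_contains_nhds:
  assumes "open I" and "t \<in> I"
  obtains U where "open U" "cis2pi t \<in> U" "U \<inter> circ \<subseteq> cis2pi ` I"
proof -
  obtain \<phi> where \<phi>: "isCont \<phi> (cis2pi t)" "\<phi> (cis2pi t) = t" "\<forall>w\<in>circ. cis2pi (\<phi> w) = w"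
    using cis2pi_local_inverse by blast
  obtain e where "e > 0" "ball t e \<subseteq> I"
    using assms openE by blast
  then obtain d where d: "d > 0" "\<And>w. dist w (cis2pi t) < d \<Longrightarrow> dist (\<phi> w) t < e"
    using \<phi>(1,2) unfolding continuous_at_eps_delta by metis
  have "ball (cis2pi t) d \<inter> circ \<subseteq> cis2pi ` I"
  proof
    fix w assume w: "w \<in> ball (cis2pi t) d \<inter> circ"
    then have "\<phi> w \<in> ball t e"
      using d by (simp add: dist_commute)
    then have "\<phi> w \<in> I"
      using \<open>ball t e \<subseteq> I\<close> by blast
    then show "w \<in> cis2pi ` I"
      using \<phi>(3) w by (metis IntD2 image_eqI)
  qed
  then show ?thesis
    using that[of "ball (cis2pi t) d"] \<open>d > 0\<close> by simp
qed

lemma eventually_in_cis2pi_image: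
  assumes "open I" and "t \<in> I"
  shows "eventually (\<lambda>w. w \<in> cis2pi ` I) (at (cis2pi t) within circ)"
proof -
  obtain U where "open U" "cis2pi t \<in> U" "U \<inter> circ \<subseteq> cis2pi ` I"
    using cis2pi_image_contains_nhds[OF assms] by blast
  then show ?thesis
    unfolding eventually_at_topological by blast
qed

lemma cis2pi_in_image_Icc_iff:
  assumes "v - 1 < s" and "s < u + 1"
  shows "cis2pi s \<in> cis2pi ` {u..v} \<longleftrightarrow> s \<in> {u..v}"
proof
  assume "cis2pi s \<in> cis2pi ` {u..v}"
  then obtain s' where "s' \<in> {u..v}" "cis2pi s = cis2pi s'"
    by auto
  moreover from this have "\<bar>s - s'\<bar> < 1"
    using assms by auto
  ultimately show "s \<in> {u..v}"
    using cis2pi_eq_imp_eq[of s s'] by simp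
qed auto

lemma cis2pi_in_image_Ioo_iff:
  assumes "v - 1 < s" and "s < u + 1"
  shows "cis2pi s \<in> cis2pi ` {u<..<v} \<longleftrightarrow> s \<in> {u<..<v}"
proof
  assume "cis2pi s \<in> cis2pi ` {u<..<v}"
  then obtain s' where "s' \<in> {u<..<v}" "cis2pi s = cis2pi s'"
    by auto
  moreover from this have "\<bar>s - s'\<bar> < 1"
    using assms by auto
  ultimately show "s \<in> {u<..<v}"
    using cis2pi_eq_imp_eq[of s s'] by simp
qed auto

lemma at_left_shift: "at_left (t + c) = filtermap (\<lambda>s. s + c) (at_left (t::real))"
proof -
  have "at_right (- t - c) = filtermap (\<lambda>s. - s - c) (at_left t)"
    using filtermap_at_right_shift[of c "- t"] at_right_minus[of "- t"] by (simp add: filtermap_filtermap)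
  then show ?thesis
    using at_left_minus[of "t + c"] by (simp add: filtermap_filtermap add.commute[of c])
qed

lemma at_right_shift: "at_right (t + c) = filtermap (\<lambda>s. s + c) (at_right (t::real))"
  using filtermap_at_right_shift[of "- c" t] by simp

lemma tendsto_cis2pi_at_left_shift:
  "((\<lambda>s. h (cis2pi s)) \<longlongrightarrow> L) (at_left (t + of_int k)) \<longleftrightarrow> ((\<lambda>s. h (cis2pi s)) \<longlongrightarrow> L) (at_left t)"
  unfolding at_left_shift filterlim_filtermap by simp

lemma tendsto_cis2pi_at_right_shift:
  "((\<lambda>s. h (cis2pi s)) \<longlongrightarrow> L) (at_right (t + of_int k)) \<longleftrightarrow> ((\<lambda>s. h (cis2pi s)) \<longlongrightarrow> L) (at_right t)"
  unfolding at_right_shift filterlim_filtermap by simp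

lemma jump_at_cis2pi:
  assumes "jump_at \<eta> (cis2pi u)"
  obtains L R where "L \<noteq> R" "((\<lambda>s. \<eta> (cis2pi s)) \<longlongrightarrow> L) (at_left u)"
    "((\<lambda>s. \<eta> (cis2pi s)) \<longlongrightarrow> R) (at_right u)" "\<eta> (cis2pi u) = L \<or> \<eta> (cis2pi u) = R"
proof -
  obtain t L R where j: "cis2pi t = cis2pi u" "L \<noteq> R"
      "((\<lambda>s. \<eta> (cis2pi s)) \<longlongrightarrow> L) (at_left t)"
      "((\<lambda>s. \<eta> (cis2pi s)) \<longlongrightarrow> R) (at_right t)" "\<eta> (cis2pi u) = L \<or> \<eta> (cis2pi u) = R"
    using assms unfolding jump_at_def by blast
  obtain k :: int where k: "t = u + of_int k"
    using j(1) cis2pi_eq_iff by blast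
  show ?thesis
    using that[OF j(2) j(3)[unfolded k tendsto_cis2pi_at_left_shift]
        j(4)[unfolded k tendsto_cis2pi_at_right_shift] j(5)] .
qed

section \<open>One-sided limits of preimage selectors\<close>

definition left_limit :: "(complex \<Rightarrow> complex) \<Rightarrow> real \<Rightarrow> complex" where
  "left_limit \<eta> t = Lim (at_left t) (\<lambda>s. \<eta> (cis2pi s))"

definition right_limit :: "(complex \<Rightarrow> complex) \<Rightarrow> real \<Rightarrow> complex" where
  "right_limit \<eta> t = Lim (at_right t) (\<lambda>s. \<eta> (cis2pi s))"

lemma preimage_selectorD:
  assumes "preimage_selector \<eta>" and "z \<in> circ"
  shows "\<eta> z \<in> circ" and "\<eta> z ^ 2 = z"
  using assms unfolding preimage_selector_def E2_def by auto

lemma in_circ_if_power2_in_circ: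
  assumes "w ^ 2 \<in> circ"
  shows "w \<in> circ"
proof -
  have "norm w ^ 2 = 1"
    using assms by (simp add: circ_def norm_power)
  then show ?thesis
    using norm_ge_zero[of w] by (simp add: circ_def power2_eq_1_iff)
qed

lemma selector_limit_square:
  assumes "preimage_selector \<eta>" and "((\<lambda>s. \<eta> (cis2pi s)) \<longlongrightarrow> L) (at t within S)"
    and "at t within S \<noteq> bot"
  shows "L ^ 2 = cis2pi t"
proof -
  have "((\<lambda>s. \<eta> (cis2pi s) ^ 2) \<longlongrightarrow> L ^ 2) (at t within S)"
    using assms(2) by (intro tendsto_intros)
  moreover have "(\<lambda>s. \<eta> (cis2pi s) ^ 2) = cis2pi"
    using preimage_selectorD(2)[OF assms(1)] by auto
  moreover have "(cis2pi \<longlongrightarrow> cis2pi t) (at t within S)"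
    using continuous_at_imp_continuous_at_within[OF isCont_cis2pi] unfolding continuous_within .
  ultimately show ?thesis
    using tendsto_unique[OF assms(3)] by metis
qed

lemma selector_jump_limits:
  assumes "preimage_selector \<eta>" and "cis2pi t \<in> discont \<eta>"
  shows "((\<lambda>s. \<eta> (cis2pi s)) \<longlongrightarrow> left_limit \<eta> t) (at_left t)"
    and "((\<lambda>s. \<eta> (cis2pi s)) \<longlongrightarrow> right_limit \<eta> t) (at_right t)"
    and "right_limit \<eta> t = - left_limit \<eta> t"
    and "left_limit \<eta> t ^ 2 = cis2pi t"
    and "\<eta> (cis2pi t) = left_limit \<eta> t \<or> \<eta> (cis2pi t) = right_limit \<eta> t"
proof -
  have "jump_at \<eta> (cis2pi t)"
    using assms unfolding preimage_selector_def by blast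
  then obtain L R where LR: "L \<noteq> R" "((\<lambda>s. \<eta> (cis2pi s)) \<longlongrightarrow> L) (at_left t)"
    "((\<lambda>s. \<eta> (cis2pi s)) \<longlongrightarrow> R) (at_right t)" "\<eta> (cis2pi t) = L \<or> \<eta> (cis2pi t) = R"
    by (rule jump_at_cis2pi)
  have lim: "left_limit \<eta> t = L" "right_limit \<eta> t = R"
    unfolding left_limit_def right_limit_def using LR(2,3) by (simp_all add: tendsto_Lim)
  have "L ^ 2 = cis2pi t" "R ^ 2 = cis2pi t"
    using selector_limit_square[OF assms(1)] LR(2,3) by simp_all
  then have "R = - L"
    using LR(1) power2_eq_iff by metis
  then show "((\<lambda>s. \<eta> (cis2pi s)) \<longlongrightarrow> left_limit \<eta> t) (at_left t)"
    and "((\<lambda>s. \<eta> (cis2pi s)) \<longlongrightarrow> right_limit \<eta> t) (at_right t)"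
    and "right_limit \<eta> t = - left_limit \<eta> t"
    and "left_limit \<eta> t ^ 2 = cis2pi t"
    and "\<eta> (cis2pi t) = left_limit \<eta> t \<or> \<eta> (cis2pi t) = right_limit \<eta> t"
    using LR \<open>L ^ 2 = cis2pi t\<close> unfolding lim by simp_all
qed

section \<open>Flipping a selector on a gap arc\<close>

definition gap_arc :: "complex set \<Rightarrow> real \<Rightarrow> real \<Rightarrow> bool" where
  "gap_arc D u v \<longleftrightarrow> u < v \<and> cis2pi u \<in> D \<and> cis2pi v \<in> D \<and> (\<forall>s\<in>{u<..<v}. cis2pi s \<notin> D)"

lemma continuous_at_gap_arc:
  assumes "gap_arc (discont \<eta>) u v" and "z \<in> cis2pi ` {u<..<v}"
  shows "continuous (at z within circ) \<eta>"
  using assms unfolding gap_arc_def discont_def by auto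

lemma continuous_on_gap_arc:
  assumes "gap_arc (discont \<eta>) u v"
  shows "continuous_on (cis2pi ` {u<..<v}) \<eta>"
  unfolding continuous_on_eq_continuous_within
proof
  fix z
  assume "z \<in> cis2pi ` {u<..<v}"
  show "continuous (at z within cis2pi ` {u<..<v}) \<eta>"
    using continuous_at_gap_arc[OF assms \<open>z \<in> cis2pi ` {u<..<v}\<close>]
    by (rule continuous_within_subset) auto
qed

definition flip_arc :: "(complex \<Rightarrow> complex) \<Rightarrow> real \<Rightarrow> real \<Rightarrow> complex \<Rightarrow> complex" where
  "flip_arc \<eta> u v z =
     (if z \<in> cis2pi ` {u<..<v} then - \<eta> z
      else if z = cis2pi u then left_limit \<eta> u
      else if z = cis2pi v then right_limit \<eta> v
      else \<eta> z)"

locale arc_flip =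
  fixes \<eta> :: "complex \<Rightarrow> complex" and u v :: real
  assumes selector: "preimage_selector \<eta>"
    and gap: "gap_arc (discont \<eta>) u v"
    and shorter_than_circle: "v < u + 1"
begin

abbreviation arc :: "complex set" where
  "arc \<equiv> cis2pi ` {u<..<v}"

abbreviation flipped :: "complex \<Rightarrow> complex" where
  "flipped \<equiv> flip_arc \<eta> u v"

lemma u_less_v: "u < v"
  using gap unfolding gap_arc_def by simp

lemma endpoints_in_discont: "cis2pi u \<in> discont \<eta>" "cis2pi v \<in> discont \<eta>"
  using gap unfolding gap_arc_def by simp_all

lemma endpoints_notin_arc: "cis2pi u \<notin> arc" "cis2pi v \<notin> arc"
  using cis2pi_in_image_Ioo_iff[of v u u] cis2pi_in_image_Ioo_iff[of v v u]
    u_less_v shorter_than_circle by auto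

lemma endpoints_distinct: "cis2pi u \<noteq> cis2pi v"
  using cis2pi_eq_imp_eq[of u v] u_less_v shorter_than_circle by auto

lemma closed_arc_eq: "cis2pi ` {u..v} = arc \<union> {cis2pi u, cis2pi v}"
proof -
  have "{u..v} = {u<..<v} \<union> {u, v}"
    using u_less_v by auto
  then show ?thesis
    by auto
qed

lemma flipped_eq_outside: "z \<notin> cis2pi ` {u..v} \<Longrightarrow> flipped z = \<eta> z"
  unfolding closed_arc_eq flip_arc_def by auto

lemma eventually_flipped_eq_outside:
  assumes "z \<notin> cis2pi ` {u..v}"
  shows "eventually (\<lambda>w. flipped w = \<eta> w) (nhds z)"
proof -
  have "closed (cis2pi ` {u..v})"
    by (intro compact_imp_closed compact_continuous_image continuous_on_cis2pi compact_Icc)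
  then have "eventually (\<lambda>w. w \<in> - cis2pi ` {u..v}) (nhds z)"
    using assms by (intro eventually_nhds_in_open) auto
  then show ?thesis
    by (rule eventually_mono) (simp add: flipped_eq_outside)
qed

lemma continuous_flipped_iff_outside:
  assumes "z \<notin> cis2pi ` {u..v}"
  shows "continuous (at z within circ) flipped \<longleftrightarrow> continuous (at z within circ) \<eta>"
proof -
  have "eventually (\<lambda>w. flipped w = \<eta> w) (at z within circ)"
    using eventually_flipped_eq_outside[OF assms] by (simp add: eventually_at_filter eventually_mono)
  then show ?thesis
    unfolding continuous_within flipped_eq_outside[OF assms] by (rule tendsto_cong)
qed

lemma continuous_flipped_on_arc:
  assumes "z \<in> arc"
  shows "continuous (at z within circ) flipped"
proof -
  obtain s where s: "s \<in> {u<..<v}" "z = cis2pi s"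
    using assms by auto
  have "eventually (\<lambda>w. w \<in> arc) (at z within circ)"
    using eventually_in_cis2pi_image[of "{u<..<v}" s] s by simp
  then have "eventually (\<lambda>w. - \<eta> w = flipped w) (at z within circ)"
    by (rule eventually_mono) (simp add: flip_arc_def)
  moreover have "((\<lambda>w. - \<eta> w) \<longlongrightarrow> - \<eta> z) (at z within circ)"
    using continuous_at_gap_arc[OF gap assms] unfolding continuous_within by (intro tendsto_intros)
  ultimately have "(flipped \<longlongrightarrow> - \<eta> z) (at z within circ)"
    by (rule Lim_transform_eventually[rotated])
  then show ?thesis
    unfolding continuous_within using assms by (simp add: flip_arc_def)
qed

lemma continuous_flipped_at_u: "continuous (at (cis2pi u) within circ) flipped"
proof -
  have "eventually (\<lambda>s. s \<in> {v - 1<..<u}) (at_left u)"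
    using u_less_v shorter_than_circle by (intro eventually_at_leftI[of "v - 1"]) auto
  then have "eventually (\<lambda>s. \<eta> (cis2pi s) = flipped (cis2pi s)) (at_left u)"
    by (rule eventually_mono) (simp add: flipped_eq_outside cis2pi_in_image_Icc_iff)
  with selector_jump_limits(1)[OF selector endpoints_in_discont(1)]
  have left: "((\<lambda>s. flipped (cis2pi s)) \<longlongrightarrow> left_limit \<eta> u) (at_left u)"
    by (rule Lim_transform_eventually)
  have "eventually (\<lambda>s. s \<in> {u<..<v}) (at_right u)"
    using u_less_v by (intro eventually_at_rightI[of _ v]) auto
  then have "eventually (\<lambda>s. - \<eta> (cis2pi s) = flipped (cis2pi s)) (at_right u)"
    by (rule eventually_mono) (simp add: flip_arc_def)
  moreover have "((\<lambda>s. - \<eta> (cis2pi s)) \<longlongrightarrow> left_limit \<eta> u) (at_right u)"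
    using tendsto_minus[OF selector_jump_limits(2)[OF selector endpoints_in_discont(1)]]
    by (simp add: selector_jump_limits(3)[OF selector endpoints_in_discont(1)])
  ultimately have right: "((\<lambda>s. flipped (cis2pi s)) \<longlongrightarrow> left_limit \<eta> u) (at_right u)"
    by (rule Lim_transform_eventually[rotated])
  have "flipped (cis2pi u) = left_limit \<eta> u"
    using endpoints_notin_arc by (simp add: flip_arc_def)
  then have "isCont (\<lambda>s. flipped (cis2pi s)) u"
    unfolding isCont_def using filterlim_split_at[OF left right] by simp
  then show ?thesis
    by (rule continuous_within_circ_if_isCont_cis2pi)
qed

lemma continuous_flipped_at_v: "continuous (at (cis2pi v) within circ) flipped"
proof -
  have "eventually (\<lambda>s. s \<in> {v<..<u + 1}) (at_right v)"
    using shorter_than_circle by (intro eventually_at_rightI[of _ "u + 1"]) auto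
  then have "eventually (\<lambda>s. \<eta> (cis2pi s) = flipped (cis2pi s)) (at_right v)"
    by (rule eventually_mono) (simp add: flipped_eq_outside cis2pi_in_image_Icc_iff)
  with selector_jump_limits(2)[OF selector endpoints_in_discont(2)]
  have right: "((\<lambda>s. flipped (cis2pi s)) \<longlongrightarrow> right_limit \<eta> v) (at_right v)"
    by (rule Lim_transform_eventually)
  have "eventually (\<lambda>s. s \<in> {u<..<v}) (at_left v)"
    using u_less_v by (intro eventually_at_leftI[of u]) auto
  then have "eventually (\<lambda>s. - \<eta> (cis2pi s) = flipped (cis2pi s)) (at_left v)"
    by (rule eventually_mono) (simp add: flip_arc_def)
  moreover have "((\<lambda>s. - \<eta> (cis2pi s)) \<longlongrightarrow> right_limit \<eta> v) (at_left v)"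
    using tendsto_minus[OF selector_jump_limits(1)[OF selector endpoints_in_discont(2)]]
    by (simp add: selector_jump_limits(3)[OF selector endpoints_in_discont(2)])
  ultimately have left: "((\<lambda>s. flipped (cis2pi s)) \<longlongrightarrow> right_limit \<eta> v) (at_left v)"
    by (rule Lim_transform_eventually[rotated])
  have "flipped (cis2pi v) = right_limit \<eta> v"
    using endpoints_notin_arc endpoints_distinct by (simp add: flip_arc_def)
  then have "isCont (\<lambda>s. flipped (cis2pi s)) v"
    unfolding isCont_def using filterlim_split_at[OF left right] by simp
  then show ?thesis
    by (rule continuous_within_circ_if_isCont_cis2pi)
qed

lemma discont_flipped: "discont flipped = discont \<eta> - {cis2pi u, cis2pi v}"
proof -
  have "z \<in> discont flipped \<longleftrightarrow> z \<in> discont \<eta> - {cis2pi u, cis2pi v}" for z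
  proof (cases "z \<in> cis2pi ` {u..v}")
    case True
    then have "z \<notin> discont flipped"
      using continuous_flipped_on_arc continuous_flipped_at_u continuous_flipped_at_v
      unfolding closed_arc_eq discont_def by auto
    moreover have "z \<notin> discont \<eta> - {cis2pi u, cis2pi v}"
      using True gap unfolding closed_arc_eq gap_arc_def by auto
    ultimately show ?thesis
      by blast
  next
    case False
    then show ?thesis
      using continuous_flipped_iff_outside[OF False] unfolding closed_arc_eq discont_def by auto
  qed
  then show ?thesis
    by blast
qed

lemma jump_at_flipped:
  assumes "z \<in> discont \<eta> - {cis2pi u, cis2pi v}"
  shows "jump_at flipped z"
proof -
  obtain t L R where j: "cis2pi t = z" "L \<noteq> R"
      "((\<lambda>s. \<eta> (cis2pi s)) \<longlongrightarrow> L) (at_left t)"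
      "((\<lambda>s. \<eta> (cis2pi s)) \<longlongrightarrow> R) (at_right t)" "\<eta> z = L \<or> \<eta> z = R"
    using assms selector unfolding preimage_selector_def jump_at_def by blast
  have z_outside: "z \<notin> cis2pi ` {u..v}"
    using assms gap unfolding closed_arc_eq gap_arc_def by auto
  have "filterlim cis2pi (nhds z) (at t)"
    using isCont_cis2pi[of t] j(1) unfolding isCont_def by simp
  then have "eventually (\<lambda>s. flipped (cis2pi s) = \<eta> (cis2pi s)) (at t)"
    by (rule eventually_compose_filterlim[OF eventually_flipped_eq_outside[OF z_outside]])
  then have ev: "eventually (\<lambda>s. flipped (cis2pi s) = \<eta> (cis2pi s)) (at_left t)"
    "eventually (\<lambda>s. flipped (cis2pi s) = \<eta> (cis2pi s)) (at_right t)"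
    unfolding eventually_at_split by auto
  have "((\<lambda>s. flipped (cis2pi s)) \<longlongrightarrow> L) (at_left t)"
    using tendsto_cong[OF ev(1)] j(3) by blast
  moreover have "((\<lambda>s. flipped (cis2pi s)) \<longlongrightarrow> R) (at_right t)"
    using tendsto_cong[OF ev(2)] j(4) by blast
  moreover have "flipped z = \<eta> z"
    using flipped_eq_outside[OF z_outside] .
  ultimately show ?thesis
    unfolding jump_at_def using j by metis
qed

lemma flipped_in_circ:
  assumes "z \<in> circ"
  shows "flipped z \<in> circ" and "E2 (flipped z) = z"
proof -
  have "flipped z ^ 2 = z"
    using selector_jump_limits(3,4)[OF selector endpoints_in_discont(1)]
      selector_jump_limits(3,4)[OF selector endpoints_in_discont(2)]
      preimage_selectorD(2)[OF selector assms]
    unfolding flip_arc_def by auto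
  then show "flipped z \<in> circ" and "E2 (flipped z) = z"
    using in_circ_if_power2_in_circ assms unfolding E2_def by auto
qed

lemma preimage_selector_flipped: "preimage_selector flipped"
  using selector flipped_in_circ discont_flipped jump_at_flipped
  unfolding preimage_selector_def by auto

lemma card_discont_flipped: "card (discont flipped) = card (discont \<eta>) - 2"
proof -
  have "finite (discont \<eta>)"
    using selector unfolding preimage_selector_def by blast
  then show ?thesis
    unfolding discont_flipped
    using card_Diff_subset[of "{cis2pi u, cis2pi v}" "discont \<eta>"]
      endpoints_in_discont endpoints_distinct by simp
qed

lemma inner_limits_in_closure: "right_limit \<eta> u \<in> closure (\<eta> ` arc)" "left_limit \<eta> v \<in> closure (\<eta> ` arc)"
proof -
  have "eventually (\<lambda>s. s \<in> {u<..<v}) (at_right u)" "eventually (\<lambda>s. s \<in> {u<..<v}) (at_left v)"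
    using u_less_v by (auto intro: eventually_at_rightI[of _ v] eventually_at_leftI[of u])
  then have "eventually (\<lambda>s. \<eta> (cis2pi s) \<in> closure (\<eta> ` arc)) (at_right u)"
    "eventually (\<lambda>s. \<eta> (cis2pi s) \<in> closure (\<eta> ` arc)) (at_left v)"
    by (auto elim!: eventually_mono intro!: closure_subset[THEN subsetD])
  then show "right_limit \<eta> u \<in> closure (\<eta> ` arc)" "left_limit \<eta> v \<in> closure (\<eta> ` arc)"
    using selector_jump_limits(2)[OF selector endpoints_in_discont(1)]
      selector_jump_limits(1)[OF selector endpoints_in_discont(2)]
    by (auto intro: Lim_in_closed_set)
qed

lemma closure_image_subset_flipped:
  "closure (\<eta> ` circ) \<subseteq> closure (\<eta> ` arc) \<union> closure (flipped ` circ)"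
proof (rule closure_minimal)
  have "\<eta> z \<in> closure (\<eta> ` arc) \<union> closure (flipped ` circ)" if "z \<in> circ" for z
  proof -
    have flipped_value: "flipped z \<in> closure (flipped ` circ)"
      using that by (auto intro: closure_subset[THEN subsetD])
    consider "z \<in> arc" | "z = cis2pi u" | "z = cis2pi v" | "z \<notin> cis2pi ` {u..v}"
      unfolding closed_arc_eq by auto
    then show ?thesis
    proof cases
      case 1
      then show ?thesis
        by (auto intro: closure_subset[THEN subsetD])
    next
      case 2
      then show ?thesis
        using selector_jump_limits(5)[OF selector endpoints_in_discont(1)]
          inner_limits_in_closure(1) flipped_value endpoints_notin_arc
        by (auto simp: flip_arc_def)
    next
      case 3
      then show ?thesis
        using selector_jump_limits(5)[OF selector endpoints_in_discont(2)]
          inner_limits_in_closure(2) flipped_value endpoints_notin_arc endpoints_distinct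
        by (auto simp: flip_arc_def)
    next
      case 4
      then show ?thesis
        using flipped_value flipped_eq_outside by auto
    qed
  qed
  then show "\<eta> ` circ \<subseteq> closure (\<eta> ` arc) \<union> closure (flipped ` circ)"
    by blast
qed auto

lemma flipped_image_square:
  assumes "x \<in> flipped ` circ"
  shows "x ^ 2 \<in> circ" and "flipped (x ^ 2) = x"
  using assms flipped_in_circ unfolding E2_def by auto

lemma image_arc_disjoint_closure_flipped: "\<eta> ` arc \<inter> closure (flipped ` circ) = {}"
proof (rule ccontr)
  assume "\<eta> ` arc \<inter> closure (flipped ` circ) \<noteq> {}"
  then obtain z where z: "z \<in> arc" "\<eta> z \<in> closure (flipped ` circ)"
    by auto
  obtain x where x: "\<And>n. x n \<in> flipped ` circ" "x \<longlonglongrightarrow> \<eta> z"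
    using z(2) unfolding closure_sequential by blast
  have "z \<in> circ"
    using z(1) by auto
  have squares: "(\<lambda>n. x n ^ 2) \<longlonglongrightarrow> z"
    using tendsto_power[OF x(2), of 2] preimage_selectorD(2)[OF selector \<open>z \<in> circ\<close>] by simp
  obtain s where s: "s \<in> {u<..<v}" "z = cis2pi s"
    using z(1) by auto
  obtain U where "open U" "cis2pi s \<in> U" "U \<inter> circ \<subseteq> arc"
    by (rule cis2pi_image_contains_nhds[OF open_greaterThanLessThan s(1)])
  then have "eventually (\<lambda>n. x n ^ 2 \<in> U) sequentially"
    using topological_tendstoD[OF squares] s(2) by blast
  then have "eventually (\<lambda>n. - \<eta> (x n ^ 2) = x n) sequentially"
  proof (rule eventually_mono)
    fix n
    assume "x n ^ 2 \<in> U"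
    then have "x n ^ 2 \<in> arc"
      using flipped_image_square(1)[OF x(1)] \<open>U \<inter> circ \<subseteq> arc\<close> by blast
    then show "- \<eta> (x n ^ 2) = x n"
      using flipped_image_square(2)[OF x(1), of n] by (simp add: flip_arc_def)
  qed
  moreover have "(\<lambda>n. - \<eta> (x n ^ 2)) \<longlonglongrightarrow> - \<eta> z"
    using continuous_within_tendsto_compose'[OF continuous_at_gap_arc[OF gap z(1)]
        flipped_image_square(1)[OF x(1)] squares]
    by (rule tendsto_minus)
  ultimately have "x \<longlonglongrightarrow> - \<eta> z"
    by (rule Lim_transform_eventually[rotated])
  then have "- \<eta> z = \<eta> z"
    using x(2) by (rule LIMSEQ_unique)
  then have "\<eta> z = 0"
    by (simp add: complex_eq_iff)
  then show False
    using preimage_selectorD(1)[OF selector \<open>z \<in> circ\<close>] by (simp add: circ_def)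
qed

end

section \<open>Gap arcs inside petals\<close>

lemma finite_cis2pi_vimage:
  assumes "finite D"
  shows "finite {s \<in> {a..b}. cis2pi s \<in> D}"
proof -
  have "finite {s \<in> {a..b}. cis2pi s = z}" for z
  proof (cases "z \<in> range cis2pi")
    case False
    then have "{s \<in> {a..b}. cis2pi s = z} = {}"
      by auto
    then show ?thesis
      by (metis finite.emptyI)
  next
    case True
    then obtain t where t: "cis2pi t = z"
      by auto
    have "{s \<in> {a..b}. cis2pi s = z} \<subseteq> (\<lambda>k. t + of_int k) ` {\<lfloor>a - t\<rfloor>..\<lceil>b - t\<rceil>}"
    proof
      fix s
      assume s: "s \<in> {s \<in> {a..b}. cis2pi s = z}"
      then obtain k :: int where k: "s = t + of_int k"
        using t cis2pi_eq_iff by auto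
      then have "a - t \<le> of_int k" "of_int k \<le> b - t"
        using s by auto
      then have "k \<in> {\<lfloor>a - t\<rfloor>..\<lceil>b - t\<rceil>}"
        by (simp add: floor_le_iff le_ceiling_iff)
      then show "s \<in> (\<lambda>k. t + of_int k) ` {\<lfloor>a - t\<rfloor>..\<lceil>b - t\<rceil>}"
        using k by blast
    qed
    then show ?thesis
      by (rule finite_subset) simp
  qed
  moreover have "{s \<in> {a..b}. cis2pi s \<in> D} = (\<Union>z\<in>D. {s \<in> {a..b}. cis2pi s = z})"
    by auto
  ultimately show ?thesis
    using assms by simp
qed

lemma eventually_cis2pi_notin:
  assumes "finite D"
  shows "eventually (\<lambda>s. cis2pi s \<notin> D) (at t)"
proof -
  define E where "E = {s \<in> {t - 1..t + 1}. cis2pi s \<in> D}"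
  have "finite E"
    unfolding E_def using finite_cis2pi_vimage[OF assms] .
  then have "eventually (\<lambda>s. \<forall>y\<in>E. s \<noteq> y) (at t)"
    by (intro eventually_ball_finite) (auto intro: eventually_neq_at_within)
  moreover have "eventually (\<lambda>s. s \<in> {t - 1<..<t + 1}) (at t)"
    using eventually_nhds_in_open[of "{t - 1<..<t + 1}" t]
    by (auto simp: eventually_at_filter elim: eventually_mono)
  ultimately show ?thesis
  proof eventually_elim
    case (elim s)
    show ?case
    proof
      assume "cis2pi s \<in> D"
      then have "s \<in> E"
        using elim(2) unfolding E_def by auto
      then show False
        using elim(1) by blast
    qed
  qed
qed

lemma gap_arc_through:
  assumes "finite D" and "D \<noteq> {}" and "D \<subseteq> circ" and "z \<in> circ" and "z \<notin> D"
  obtains u v where "u \<in> {0..3}" "v \<in> {0..3}" "gap_arc D u v" "z \<in> cis2pi ` {u<..<v}"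
proof -
  obtain s0 where "cis2pi s0 = z"
    using assms(4) by (rule in_circE)
  define s where "s = s0 + of_int (1 - \<lfloor>s0\<rfloor>)"
  have "cis2pi s = z"
    using \<open>cis2pi s0 = z\<close> unfolding s_def by (simp only: cis2pi_add_of_int)
  moreover have "1 \<le> s" "s < 2"
    unfolding s_def by linarith+
  ultimately have s: "cis2pi s = z" "1 \<le> s" "s < 2"
    by blast+
  obtain t0 where "cis2pi t0 \<in> D"
    using assms(2,3) by (blast elim: in_circE)
  define t where "t = t0 + of_int \<lceil>s - 1 - t0\<rceil>"
  have "cis2pi t \<in> D"
    using \<open>cis2pi t0 \<in> D\<close> unfolding t_def by (simp only: cis2pi_add_of_int)
  moreover have "s - 1 \<le> t" "t < s"
    unfolding t_def by linarith+
  ultimately have t: "cis2pi t \<in> D" "s - 1 \<le> t" "t < s"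
    by blast+
  define T where "T = {x \<in> {s - 1..s + 1}. cis2pi x \<in> D}"
  have "finite T"
    unfolding T_def by (rule finite_cis2pi_vimage[OF assms(1)])
  have "s \<notin> T"
    using s(1) assms(5) unfolding T_def by auto
  have "t \<in> T" "t + 1 \<in> T"
    using t unfolding T_def by auto
  define below where "below = {x \<in> T. x < s}"
  define above where "above = {x \<in> T. s < x}"
  define u where "u = Max below"
  define v where "v = Min above"
  have "finite below" "t \<in> below"
    using \<open>finite T\<close> \<open>t \<in> T\<close> t(3) unfolding below_def by auto
  then have "u \<in> below" "\<And>x. x \<in> below \<Longrightarrow> x \<le> u"
    unfolding u_def by (auto intro: Max_in)
  then have u: "u \<in> T" "u < s" "\<And>x. x \<in> T \<Longrightarrow> x < s \<Longrightarrow> x \<le> u"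
    unfolding below_def by auto
  have "s \<noteq> t + 1"
    using \<open>s \<notin> T\<close> \<open>t + 1 \<in> T\<close> by blast
  then have "finite above" "t + 1 \<in> above"
    using \<open>finite T\<close> \<open>t + 1 \<in> T\<close> t(2) unfolding above_def by auto
  then have "v \<in> above" "\<And>x. x \<in> above \<Longrightarrow> v \<le> x"
    unfolding v_def by (auto intro: Min_in)
  then have v: "v \<in> T" "s < v" "\<And>x. x \<in> T \<Longrightarrow> s < x \<Longrightarrow> v \<le> x"
    unfolding above_def by auto
  have "cis2pi w \<notin> D" if "w \<in> {u<..<v}" for w
  proof
    assume "cis2pi w \<in> D"
    then have "w \<in> T"
      using that u(1) v(1) unfolding T_def by auto
    then show False
      using that u(3)[of w] v(3)[of w] \<open>s \<notin> T\<close> by (cases w s rule: linorder_cases) auto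
  qed
  then have "gap_arc D u v"
    using u v unfolding gap_arc_def T_def by auto
  moreover have "z \<in> cis2pi ` {u<..<v}"
    using s(1) u(2) v(2) by auto
  moreover have "u \<in> {0..3}" "v \<in> {0..3}"
    using u(1) v(1) s(2,3) unfolding T_def by auto
  ultimately show ?thesis
    using that by blast
qed

lemma closure_selector_image_covered_by_gap_arcs:
  assumes "preimage_selector \<eta>" and "discont \<eta> \<noteq> {}" and "x \<in> closure (\<eta> ` circ)"
  obtains u v where "gap_arc (discont \<eta>) u v" "x \<in> closure (\<eta> ` cis2pi ` {u<..<v})"
proof -
  define D where "D = discont \<eta>"
  have "finite D" "D \<subseteq> circ"
    using assms(1) unfolding D_def preimage_selector_def discont_def by auto
  \<comment> \<open>The bound \<open>[0, 3]\<close> still reaches every point (\<open>gap_arc_through\<close>) and keeps the union finite.\<close>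
  define Q where "Q = {(u, v). u \<in> {0..3} \<and> v \<in> {0..3} \<and> gap_arc D u v}"
  define K where "K = (\<Union>(u, v)\<in>Q. closure (\<eta> ` cis2pi ` {u<..<v}))"
  have "Q \<subseteq> {s \<in> {0..3}. cis2pi s \<in> D} \<times> {s \<in> {0..3}. cis2pi s \<in> D}"
  proof
    fix q
    assume "q \<in> Q"
    then obtain a b where "q = (a, b)" "a \<in> {0..3}" "b \<in> {0..3}" "gap_arc D a b"
      unfolding Q_def by blast
    then show "q \<in> {s \<in> {0..3}. cis2pi s \<in> D} \<times> {s \<in> {0..3}. cis2pi s \<in> D}"
      unfolding gap_arc_def by simp
  qed
  then have "finite Q"
    by (rule finite_subset) (intro finite_cartesian_product finite_cis2pi_vimage \<open>finite D\<close>)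
  then have "closed K"
    unfolding K_def by (intro closed_UN) auto
  have K_continuity: "\<eta> z \<in> K" if z: "z \<in> circ" "z \<notin> D" for z
  proof -
    obtain u v where "u \<in> {0..3}" "v \<in> {0..3}" "gap_arc D u v" "z \<in> cis2pi ` {u<..<v}"
      by (rule gap_arc_through[OF \<open>finite D\<close> assms(2)[folded D_def] \<open>D \<subseteq> circ\<close> z])
    then have "(u, v) \<in> Q" "\<eta> z \<in> closure (\<eta> ` cis2pi ` {u<..<v})"
      unfolding Q_def by (auto intro: closure_subset[THEN subsetD])
    then show ?thesis
      unfolding K_def by (intro UN_I[of "(u, v)"]) auto
  qed
  have K_jump: "\<eta> d \<in> K" if d: "d \<in> D" for d
  proof -
    obtain t where t: "cis2pi t = d"
      using d \<open>D \<subseteq> circ\<close> by (blast elim: in_circE)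
    have "eventually (\<lambda>s. \<eta> (cis2pi s) \<in> K) (at t)"
      using eventually_cis2pi_notin[OF \<open>finite D\<close>, of t] by (rule eventually_mono) (simp add: K_continuity)
    then have "eventually (\<lambda>s. \<eta> (cis2pi s) \<in> K) (at_left t)"
      "eventually (\<lambda>s. \<eta> (cis2pi s) \<in> K) (at_right t)"
      unfolding eventually_at_split by auto
    then have "left_limit \<eta> t \<in> K" "right_limit \<eta> t \<in> K"
      using selector_jump_limits(1,2)[OF assms(1)] d t \<open>closed K\<close>
      unfolding D_def by (auto intro: Lim_in_closed_set)
    moreover have "cis2pi t \<in> discont \<eta>"
      using d t unfolding D_def by simp
    ultimately show ?thesis
      using selector_jump_limits(5)[OF assms(1)] t by metis
  qed
  have "\<eta> ` circ \<subseteq> K"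
  proof (rule image_subsetI)
    fix z
    assume "z \<in> circ"
    then show "\<eta> z \<in> K"
      using K_continuity K_jump by (cases "z \<in> D") auto
  qed
  then have "x \<in> K"
    using assms(3) closure_minimal[OF _ \<open>closed K\<close>] by blast
  then obtain u v where "(u, v) \<in> Q" "x \<in> closure (\<eta> ` cis2pi ` {u<..<v})"
    unfolding K_def by blast
  then show ?thesis
    using that unfolding Q_def D_def by blast
qed

lemma gap_arc_shorter_than_circle:
  assumes "finite D" and "D \<subseteq> circ" and "2 \<le> card D" and "gap_arc D u v"
  shows "v < u + 1"
proof (rule ccontr)
  assume "\<not> v < u + 1"
  moreover have "u + 1 \<notin> {u<..<v}"
  proof
    assume "u + 1 \<in> {u<..<v}"
    then have "cis2pi (u + 1) \<notin> D"
      using assms(4) unfolding gap_arc_def by blast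
    then show False
      using assms(4) unfolding gap_arc_def by simp
  qed
  ultimately have "v = u + 1"
    by auto
  have "D \<subseteq> {cis2pi u}"
  proof
    fix d
    assume "d \<in> D"
    then obtain s where s: "cis2pi s = d"
      using assms(2) by (blast elim: in_circE)
    define s' where "s' = s + of_int (- \<lfloor>s - u\<rfloor>)"
    have "cis2pi s' = d"
      using s unfolding s'_def by (simp only: cis2pi_add_of_int)
    moreover have "u \<le> s'" "s' < u + 1"
      unfolding s'_def by linarith+
    ultimately show "d \<in> {cis2pi u}"
      using assms(4) \<open>d \<in> D\<close> \<open>v = u + 1\<close> unfolding gap_arc_def by force
  qed
  then have "card D \<le> 1"
    using card_mono[of "{cis2pi u}" D] by simp
  then show False
    using assms(3) by simp
qed

lemma petal_contains_gap_arc: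
  assumes "preimage_selector \<eta>" and "2 \<le> card (discont \<eta>)"
    and "P \<in> components (closure (\<eta> ` circ))"
  obtains u v where "gap_arc (discont \<eta>) u v" "v < u + 1" "closure (\<eta> ` cis2pi ` {u<..<v}) \<subseteq> P"
proof -
  have "finite (discont \<eta>)" "discont \<eta> \<subseteq> circ"
    using assms(1) unfolding preimage_selector_def discont_def by auto
  have "discont \<eta> \<noteq> {}"
    using assms(2) by auto
  obtain x where "x \<in> P"
    using in_components_nonempty[OF assms(3)] by blast
  then have "x \<in> closure (\<eta> ` circ)"
    using assms(3) in_components_subset by blast
  then obtain u v where gap: "gap_arc (discont \<eta>) u v" and x: "x \<in> closure (\<eta> ` cis2pi ` {u<..<v})"
    using closure_selector_image_covered_by_gap_arcs[OF assms(1) \<open>discont \<eta> \<noteq> {}\<close>] by blast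
  have "connected (closure (\<eta> ` cis2pi ` {u<..<v}))"
    by (intro connected_imp_connected_closure connected_continuous_image continuous_on_gap_arc[OF gap]
        connected_continuous_image[OF continuous_on_cis2pi connected_Ioo])
  moreover have "closure (\<eta> ` cis2pi ` {u<..<v}) \<subseteq> closure (\<eta> ` circ)"
    by (intro closure_mono image_mono) auto
  ultimately have "closure (\<eta> ` cis2pi ` {u<..<v}) \<subseteq> P"
    using components_maximal[OF assms(3)] x \<open>x \<in> P\<close> by blast
  moreover have "v < u + 1"
    using gap_arc_shorter_than_circle \<open>finite (discont \<eta>)\<close> \<open>discont \<eta> \<subseteq> circ\<close> assms(2) gap by blast
  ultimately show ?thesis
    using that gap by blast
qed

section \<open>Supports of Borel measures\<close>

lemma compl_supp_null:
  assumes "sets \<mu> = sets (borel :: complex measure)"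
  shows "- supp \<mu> \<in> null_sets \<mu>"
proof -
  define G where "G = {U :: complex set. open U \<and> emeasure \<mu> U = 0}"
  have "- supp \<mu> = \<Union>G"
    unfolding supp_def G_def by (auto simp: not_less)
  moreover obtain G' where "G' \<subseteq> G" "countable G'" "\<Union>G' = \<Union>G"
    using Lindelof[of G] unfolding G_def by blast
  moreover have "(\<Union>U\<in>G'. U) \<in> null_sets \<mu>"
    using \<open>countable G'\<close> \<open>G' \<subseteq> G\<close> assms
    by (intro null_sets_UN') (auto simp: G_def null_sets_def borel_open)
  ultimately show ?thesis
    by simp
qed

lemma supp_subset_if_null_cover:
  assumes "sets \<mu> = sets (borel :: complex measure)" and "supp \<mu> \<subseteq> N \<union> C"
    and "N \<in> null_sets \<mu>" and "closed C"
  shows "supp \<mu> \<subseteq> C"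
proof
  fix x
  assume "x \<in> supp \<mu>"
  show "x \<in> C"
  proof (rule ccontr)
    assume "x \<notin> C"
    moreover have "open (- C)"
      using assms(4) by auto
    ultimately have "emeasure \<mu> (- C) > 0"
      using \<open>x \<in> supp \<mu>\<close> unfolding supp_def by blast
    have "N \<union> - supp \<mu> \<in> null_sets \<mu>"
      by (intro null_sets.Un assms(3) compl_supp_null[OF assms(1)])
    moreover have "- C \<in> sets \<mu>"
      using assms(1) \<open>open (- C)\<close> by (simp add: borel_open)
    moreover have "- C \<subseteq> N \<union> - supp \<mu>"
      using assms(2) by blast
    ultimately have "- C \<in> null_sets \<mu>"
      by (rule null_sets_subset)
    with \<open>emeasure \<mu> (- C) > 0\<close> show False
      by (simp add: null_setsD1)
  qed
qed

theorem lemma4: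
  fixes \<mu> :: "complex measure" and F P :: "complex set" and p :: nat
  assumes "E2_invariant_prob \<mu>"
    and "p \<ge> 3"
    and "flower p F"
    and "supp \<mu> \<subseteq> F"
    and "P \<in> petals F"
    and "emeasure \<mu> P = 0"
  shows "\<exists>F'. flower (p - 2) F' \<and> supp \<mu> \<subseteq> F' \<and> \<not> P \<subseteq> F'"
proof -
  obtain \<eta> where \<eta>: "preimage_selector \<eta>" "card (discont \<eta>) = p" "F = closure (\<eta> ` circ)"
    using assms(3) unfolding flower_def by blast
  obtain u v where "gap_arc (discont \<eta>) u v" "v < u + 1"
    and arc_in_P: "closure (\<eta> ` cis2pi ` {u<..<v}) \<subseteq> P"
    using petal_contains_gap_arc[OF \<eta>(1)] assms(2,5) \<eta>(2,3) unfolding petals_def by auto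
  then interpret arc_flip \<eta> u v
    using \<eta>(1) by unfold_locales
  define F' where "F' = closure (flipped ` circ)"
  have "flower (p - 2) F'"
    unfolding flower_def F'_def using preimage_selector_flipped card_discont_flipped \<eta>(2) by auto
  moreover have "supp \<mu> \<subseteq> F'"
  proof (rule supp_subset_if_null_cover)
    show "sets \<mu> = sets borel"
      using assms(1) unfolding E2_invariant_prob_def by blast
    show "supp \<mu> \<subseteq> closure (\<eta> ` arc) \<union> F'"
      using assms(4) closure_image_subset_flipped unfolding \<eta>(3) F'_def by blast
    have "closed F"
      unfolding \<eta>(3) by simp
    then have "closed P"
      using closed_components assms(5) unfolding petals_def by blast
    then have "P \<in> null_sets \<mu>"
      using assms(6) \<open>sets \<mu> = sets borel\<close> by (simp add: null_sets_def borel_closed)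
    moreover have "closure (\<eta> ` arc) \<in> sets \<mu>"
      using \<open>sets \<mu> = sets borel\<close> by (simp add: borel_closed)
    ultimately show "closure (\<eta> ` arc) \<in> null_sets \<mu>"
      using arc_in_P by (rule null_sets_subset)
  qed (simp add: F'_def)
  moreover have "\<not> P \<subseteq> F'"
  proof
    assume "P \<subseteq> F'"
    have "(u + v) / 2 \<in> {u<..<v}"
      using u_less_v by simp
    then have "\<eta> (cis2pi ((u + v) / 2)) \<in> \<eta> ` arc"
      by (rule imageI[OF imageI])
    moreover have "\<eta> ` arc \<subseteq> F'"
      using closure_subset arc_in_P \<open>P \<subseteq> F'\<close> by (rule order_trans[OF order_trans])
    ultimately show False
      using image_arc_disjoint_closure_flipped unfolding F'_def by (metis IntI empty_iff subsetD)
  qed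
  ultimately show ?thesis
    by blast
qed

end
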